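(* Let $R>1$ and $N\ge1$ with $RN$ an integer. For every encoding channel $\mathcal E$ from $RN$ qubits to $N$ qubits together with a classical register $M$, and every decoding channel $\mathcal D$ from the $N$ qubits and $M$ back to $RN$ qubits, \[ F_c\bigl(\mathcal D\circ(\mathcal I_2^{\otimes N}\otimes\mathcal I_M)\circ\mathcal E\bigr)\le 2^{-(R-1)N}, \] where $\mathcal I_2$ is the one-qubit identity channel; i.e. the strong converse parameter of $\mathcal I_2$ at rate $R$ satisfies $\gamma^Q(\mathcal I_2,R)=R-1>0$.
   Context: $\log$ base 2. For a channel $\Lambda$ on $m$ qubits, the channel fidelity is $F_c(\Lambda)=\langle\Phi|(\mathrm{id}\otimes\Lambda)(\Phi)|\Phi\rangle$ with $\Phi$ the maximally entangled state on $2^m\times2^m$ dimensions. A strong converse with parameter $\gamma^Q(\mathcal N,R)>0$ for a channel $\mathcal N$ at rate $R$ means that for all $N$ and all encodings $\mathcal E$ of $RN$ qubits into the input of $\mathcal N^{\otimes N}$ plus free forward classical communication $M$, and all decodings $\mathcal D$, $F_c(\mathcal D\circ(\mathcal N^{\otimes N}\otimes\mathcal I_M)\circ\mathcal E)\le2^{-\gamma^Q(\mathcal N,R)N}$. *)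

theory Defs
  imports Complex_Main "Jordan_Normal_Form.Schur_Decomposition"
begin

definition kraus_channel :: "nat \<Rightarrow> nat \<Rightarrow> complex mat list \<Rightarrow> bool" where
  "kraus_channel din dout Ks \<longleftrightarrow>
     (\<forall>K\<in>set Ks. K \<in> carrier_mat dout din) \<and>
     foldr (\<lambda>K acc. mat_adjoint K * K + acc) Ks (0\<^sub>m din din) = 1\<^sub>m din"

definition apply_kraus :: "nat \<Rightarrow> complex mat list \<Rightarrow> complex mat \<Rightarrow> complex mat" where
  "apply_kraus dout Ks \<rho> = foldr (\<lambda>K acc. K * \<rho> * mat_adjoint K + acc) Ks (0\<^sub>m dout dout)"

definition mat_unit :: "nat \<Rightarrow> nat \<Rightarrow> nat \<Rightarrow> complex mat" where
  "mat_unit d i j = mat d d (\<lambda>(r, c). if r = i \<and> c = j then 1 else 0)"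

(* channel fidelity F_c(L) = <Phi|(id (x) L)(Phi)|Phi>, Phi maximally entangled on d x d;
   expanded: (1/d^2) sum_{i,j<d} <i| L(|i><j|) |j> *)
definition channel_fidelity :: "nat \<Rightarrow> (complex mat \<Rightarrow> complex mat) \<Rightarrow> complex" where
  "channel_fidelity d \<Lambda> =
     (\<Sum>i<d. \<Sum>j<d. \<Lambda> (mat_unit d i j) $$ (i, j)) / of_nat (d * d)"

(* System = (N qubits) (x) (classical register M of size m), basis index a*m + x,
   a < 2^N, x < m.  The register being classical means it is (completely) dephased
   in its computational basis; the identity channel on the N qubits acts trivially. *)
definition classical_reg_proj :: "nat \<Rightarrow> nat \<Rightarrow> nat \<Rightarrow> complex mat" where
  "classical_reg_proj N m x =
     mat (2 ^ N * m) (2 ^ N * m) (\<lambda>(r, c). if r = c \<and> r mod m = x then 1 else 0)"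

definition id_qubits_classical :: "nat \<Rightarrow> nat \<Rightarrow> complex mat list" where
  "id_qubits_classical N m = map (classical_reg_proj N m) [0..<m]"

end

theory Submission
  imports Defs "HOL-Analysis.Convex"
begin

text \<open>
  Up to the factor \<open>d\<^sup>-\<^sup>2\<close>, \<open>d = 2\<^sup>k\<close>, the channel fidelity of the composite channel is the sum of
  \<open>|tr K|\<^sup>2\<close> over its Kraus operators \<open>K = D\<^sub>l P\<^sub>x E\<^sub>t\<close>, where \<open>P\<^sub>x\<close> projects onto the register
  value \<open>x\<close>. The trace of \<open>D\<^sub>l P\<^sub>x E\<^sub>t\<close> collects the \<open>2\<^sup>N\<close> diagonal entries \<open>(E\<^sub>t D\<^sub>l)\<^sub>a\<^sub>a\<close> with
  \<open>a mod m = x\<close>, so Cauchy-Schwarz costs a factor \<open>2\<^sup>N\<close>. A second Cauchy-Schwarz inequality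
  together with trace preservation of encoder and decoder bounds \<open>\<Sum> |(E\<^sub>t D\<^sub>l)\<^sub>a\<^sub>a|\<^sup>2\<close> by \<open>d\<close>.
  Hence \<open>F\<^sub>c \<le> 2\<^sup>N d / d\<^sup>2 = 2\<^sup>N\<^sup>-\<^sup>k\<close>.
\<close>

lemma sum_rotate3:
  "(\<Sum>i\<in>I. \<Sum>j\<in>J. \<Sum>x\<in>X. f i j x) = (\<Sum>x\<in>X. \<Sum>i\<in>I. \<Sum>j\<in>J. f i j x)"
proof -
  have "(\<Sum>i\<in>I. \<Sum>j\<in>J. \<Sum>x\<in>X. f i j x) = (\<Sum>i\<in>I. \<Sum>x\<in>X. \<Sum>j\<in>J. f i j x)"
    by (rule sum.cong[OF refl], rule sum.swap)
  also have "\<dots> = (\<Sum>x\<in>X. \<Sum>i\<in>I. \<Sum>j\<in>J. f i j x)"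
    by (rule sum.swap)
  finally show ?thesis .
qed

lemma sum_sum_delta:
  fixes F :: "nat \<Rightarrow> nat \<Rightarrow> 'a::comm_monoid_add"
  assumes "i < c" and "j < c"
  shows "(\<Sum>p<c. \<Sum>q<c. if p = i \<and> q = j then F p q else 0) = F i j"
proof -
  have "(\<Sum>p<c. \<Sum>q<c. if p = i \<and> q = j then F p q else 0)
      = (\<Sum>p<c. if p = i then (\<Sum>q<c. if q = j then F p q else 0) else 0)"
    by (intro sum.cong refl) auto
  also have "\<dots> = F i j"
    using assms by simp
  finally show ?thesis .
qed

lemma card_same_residue:
  assumes "r < m"
  shows "card {b\<in>{..<M * m}. b mod m = r} = M"
proof -
  have "{b\<in>{..<M * m}. b mod m = r} = (\<lambda>q. q * m + r) ` {..<M}"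
  proof (intro equalityI subsetI)
    fix b assume "b \<in> {b\<in>{..<M * m}. b mod m = r}"
    then have "b = (b div m) * m + r" "b div m < M"
      by (auto simp: less_mult_imp_div_less)
    then show "b \<in> (\<lambda>q. q * m + r) ` {..<M}" by blast
  next
    fix b assume "b \<in> (\<lambda>q. q * m + r) ` {..<M}"
    then obtain q where "q < M" "b = q * m + r" by auto
    moreover have "q * m + r < (q + 1) * m" using assms by simp
    moreover have "(q + 1) * m \<le> M * m" using \<open>q < M\<close> mult_le_mono1[of "q + 1" M m] by simp
    ultimately show "b \<in> {b\<in>{..<M * m}. b mod m = r}" using assms by auto
  qed
  moreover have "inj_on (\<lambda>q. q * m + r) {..<M}"
    using assms by (intro inj_onI) simp
  ultimately show ?thesis by (simp add: card_image)
qed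

lemma Re_mult_cnj_le: "Re (z * cnj w) \<le> ((cmod z)\<^sup>2 + (cmod w)\<^sup>2) / 2"
proof -
  have "Re (z * cnj w) \<le> cmod z * cmod w"
    using complex_Re_le_cmod[of "z * cnj w"] by (simp add: norm_mult)
  also have "\<dots> \<le> ((cmod z)\<^sup>2 + (cmod w)\<^sup>2) / 2"
    using sum_squares_bound[of "cmod z" "cmod w"] by simp
  finally show ?thesis .
qed

lemma Re_sum_same_residue_le:
  fixes f :: "nat \<Rightarrow> complex"
  assumes "m \<ge> 1"
  shows "Re (\<Sum>a<M * m. \<Sum>b<M * m. if a mod m = b mod m then f a * cnj (f b) else 0)
         \<le> M * (\<Sum>a<M * m. (cmod (f a))\<^sup>2)"
proof -
  define g where "g a = (cmod (f a))\<^sup>2" for a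
  let ?S = "\<lambda>h :: nat \<Rightarrow> real. \<Sum>a<M * m. \<Sum>b<M * m. if a mod m = b mod m then h a else 0"
  have sym: "(\<Sum>a<M * m. \<Sum>b<M * m. if a mod m = b mod m then g b else 0) = ?S g"
    by (subst sum.swap) (intro sum.cong refl, simp)
  have "Re (\<Sum>a<M * m. \<Sum>b<M * m. if a mod m = b mod m then f a * cnj (f b) else 0)
      \<le> (\<Sum>a<M * m. \<Sum>b<M * m. if a mod m = b mod m then (g a + g b) / 2 else 0)"
    unfolding Re_sum g_def
  proof (intro sum_mono)
    fix a b
    show "Re (if a mod m = b mod m then f a * cnj (f b) else 0)
          \<le> (if a mod m = b mod m then ((cmod (f a))\<^sup>2 + (cmod (f b))\<^sup>2) / 2 else 0)"
      using Re_mult_cnj_le[of "f a" "f b"] by auto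
  qed
  also have "\<dots> = (\<Sum>a<M * m. \<Sum>b<M * m.
      ((if a mod m = b mod m then g a else 0) + (if a mod m = b mod m then g b else 0)) / 2)"
    by (intro sum.cong refl) auto
  also have "\<dots> = (?S g + (\<Sum>a<M * m. \<Sum>b<M * m. if a mod m = b mod m then g b else 0)) / 2"
    by (simp only: sum.distrib flip: sum_divide_distrib)
  also have "\<dots> = ?S g"
    unfolding sym by simp
  also have "\<dots> = (\<Sum>a<M * m. M * g a)"
  proof (intro sum.cong refl)
    fix a assume "a \<in> {..<M * m}"
    have "{b\<in>{..<M * m}. a mod m = b mod m} = {b\<in>{..<M * m}. b mod m = a mod m}"
      by auto
    then have "(\<Sum>b<M * m. if a mod m = b mod m then g a else 0) = card {b\<in>{..<M * m}. b mod m = a mod m} * g a"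
      by (simp only: sum.inter_filter[OF finite_lessThan, symmetric] sum_constant)
    also have "\<dots> = M * g a"
      using assms card_same_residue[of "a mod m" m M] by simp
    finally show "(\<Sum>b<M * m. if a mod m = b mod m then g a else 0) = M * g a" .
  qed
  finally show ?thesis
    by (simp add: g_def sum_distrib_left)
qed

lemma cmod_sum_mult_square_le:
  fixes x y :: "'i \<Rightarrow> complex"
  shows "(cmod (\<Sum>i\<in>I. x i * y i))\<^sup>2 \<le> (\<Sum>i\<in>I. (cmod (x i))\<^sup>2) * (\<Sum>i\<in>I. (cmod (y i))\<^sup>2)"
proof -
  have "cmod (\<Sum>i\<in>I. x i * y i) \<le> (\<Sum>i\<in>I. cmod (x i) * cmod (y i))"
    using norm_sum[of "\<lambda>i. x i * y i" I] by (simp add: norm_mult)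
  then have "(cmod (\<Sum>i\<in>I. x i * y i))\<^sup>2 \<le> (\<Sum>i\<in>I. cmod (x i) * cmod (y i))\<^sup>2"
    by (intro power_mono) auto
  also have "\<dots> \<le> (\<Sum>i\<in>I. (cmod (x i))\<^sup>2) * (\<Sum>i\<in>I. (cmod (y i))\<^sup>2)"
    by (rule Cauchy_Schwarz_ineq_sum)
  finally show ?thesis .
qed

lemma foldr_add_mat_carrier:
  assumes "\<forall>K\<in>set Ks. f K \<in> carrier_mat r r"
  shows "foldr (\<lambda>K acc. f K + acc) Ks (0\<^sub>m r r) \<in> carrier_mat r r"
  using assms by (induction Ks) auto

lemma foldr_add_mat_index:
  assumes "\<forall>K\<in>set Ks. f K \<in> carrier_mat r r" and "a < r" and "b < r"
  shows "foldr (\<lambda>K acc. f K + acc) Ks (0\<^sub>m r r) $$ (a, b) = (\<Sum>t<length Ks. f (Ks ! t) $$ (a, b))"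
  using assms
proof (induction Ks)
  case (Cons K Ks)
  then have "foldr (\<lambda>K acc. f K + acc) Ks (0\<^sub>m r r) \<in> carrier_mat r r"
    by (intro foldr_add_mat_carrier) auto
  with Cons show ?case
    by (simp del: sum.lessThan_Suc add: sum.lessThan_Suc_shift)
qed simp

lemma mat_adjoint_carrier: "K \<in> carrier_mat r c \<Longrightarrow> mat_adjoint K \<in> carrier_mat c r"
  unfolding mat_adjoint_def by auto

lemma mat_adjoint_index:
  "K \<in> carrier_mat r c \<Longrightarrow> i < c \<Longrightarrow> j < r \<Longrightarrow> mat_adjoint K $$ (i, j) = cnj (K $$ (j, i))"
  unfolding mat_adjoint_def by (auto simp: mat_of_rows_def)

lemma mat_mult_diag_index:
  assumes "A \<in> carrier_mat n d" and "B \<in> carrier_mat d n" and "a < n"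
  shows "(A * B) $$ (a, a) = (\<Sum>i<d. A $$ (a, i) * B $$ (i, a))"
  using assms by (simp add: scalar_prod_def lessThan_atLeast0)

lemma apply_kraus_carrier:
  assumes "\<forall>K\<in>set Ks. K \<in> carrier_mat r c" and "\<rho> \<in> carrier_mat c c"
  shows "apply_kraus r Ks \<rho> \<in> carrier_mat r r"
  unfolding apply_kraus_def
  using assms by (intro foldr_add_mat_carrier) (meson mult_carrier_mat mat_adjoint_carrier)

lemma apply_kraus_index:
  assumes "\<forall>K\<in>set Ks. K \<in> carrier_mat r c" and "\<rho> \<in> carrier_mat c c" and "a < r" and "b < r"
  shows "apply_kraus r Ks \<rho> $$ (a, b) =
    (\<Sum>t<length Ks. \<Sum>p<c. \<Sum>q<c. (Ks ! t) $$ (a, p) * \<rho> $$ (p, q) * cnj ((Ks ! t) $$ (b, q)))"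
proof -
  have "(K * \<rho> * mat_adjoint K) $$ (a, b) = (\<Sum>p<c. \<Sum>q<c. K $$ (a, p) * \<rho> $$ (p, q) * cnj (K $$ (b, q)))"
    if "K \<in> carrier_mat r c" for K
    using that assms mat_adjoint_carrier[OF that]
    by (auto simp: scalar_prod_def mat_adjoint_index lessThan_atLeast0 sum_distrib_left mult.assoc
             intro!: sum.cong)
  moreover have "\<forall>K\<in>set Ks. K * \<rho> * mat_adjoint K \<in> carrier_mat r r"
    using assms by (meson mult_carrier_mat mat_adjoint_carrier)
  ultimately show ?thesis
    unfolding apply_kraus_def using assms
    by (simp add: foldr_add_mat_index)
qed

lemma kraus_channel_column_norm:
  assumes "kraus_channel c r Ks" and "a < c"
  shows "(\<Sum>t<length Ks. \<Sum>p<r. (cmod ((Ks ! t) $$ (p, a)))\<^sup>2) = 1"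
proof -
  have car: "\<forall>K\<in>set Ks. K \<in> carrier_mat r c"
    using assms unfolding kraus_channel_def by auto
  have diag: "(mat_adjoint K * K) $$ (a, a) = (\<Sum>p<r. of_real ((cmod (K $$ (p, a)))\<^sup>2))"
    if K: "K \<in> carrier_mat r c" for K
  proof -
    have "(mat_adjoint K * K) $$ (a, a) = (\<Sum>p<r. cnj (K $$ (p, a)) * K $$ (p, a))"
      using K assms(2) mat_adjoint_carrier[OF K]
      by (auto simp: scalar_prod_def mat_adjoint_index lessThan_atLeast0 intro!: sum.cong)
    also have "\<dots> = (\<Sum>p<r. of_real ((cmod (K $$ (p, a)))\<^sup>2))"
      by (intro sum.cong refl) (subst complex_norm_square, rule mult.commute)
    finally show ?thesis .
  qed
  have "\<forall>K\<in>set Ks. mat_adjoint K * K \<in> carrier_mat c c"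
    using car by (meson mult_carrier_mat mat_adjoint_carrier)
  then have "(1::complex) = (\<Sum>t<length Ks. (mat_adjoint (Ks ! t) * Ks ! t) $$ (a, a))"
    using assms foldr_add_mat_index[of Ks "\<lambda>K. mat_adjoint K * K" c a a]
    unfolding kraus_channel_def by simp
  also have "\<dots> = (\<Sum>t<length Ks. \<Sum>p<r. of_real ((cmod ((Ks ! t) $$ (p, a)))\<^sup>2))"
    using car by (intro sum.cong refl) (simp add: diag)
  finally have "of_real (\<Sum>t<length Ks. \<Sum>p<r. (cmod ((Ks ! t) $$ (p, a)))\<^sup>2) = (1::complex)"
    by (simp only: of_real_sum)
  then show ?thesis
    by (simp only: of_real_eq_1_iff)
qed

lemma apply_kraus_mat_unit_index:
  assumes "\<forall>K\<in>set Ks. K \<in> carrier_mat r c" and "i < c" "j < c" "a < r" "b < r"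
  shows "apply_kraus r Ks (mat_unit c i j) $$ (a, b) =
    (\<Sum>t<length Ks. (Ks ! t) $$ (a, i) * cnj ((Ks ! t) $$ (b, j)))"
proof -
  have "mat_unit c i j \<in> carrier_mat c c"
    by (simp add: mat_unit_def)
  then have "apply_kraus r Ks (mat_unit c i j) $$ (a, b) =
    (\<Sum>t<length Ks. \<Sum>p<c. \<Sum>q<c. (Ks ! t) $$ (a, p) * mat_unit c i j $$ (p, q) * cnj ((Ks ! t) $$ (b, q)))"
    using assms by (simp add: apply_kraus_index)
  also have "\<dots> = (\<Sum>t<length Ks. \<Sum>p<c. \<Sum>q<c.
      if p = i \<and> q = j then (Ks ! t) $$ (a, p) * cnj ((Ks ! t) $$ (b, q)) else 0)"
    by (intro sum.cong refl) (simp add: mat_unit_def)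
  also have "\<dots> = (\<Sum>t<length Ks. (Ks ! t) $$ (a, i) * cnj ((Ks ! t) $$ (b, j)))"
    using assms by (simp add: sum_sum_delta)
  finally show ?thesis .
qed

lemma apply_kraus_id_qubits_classical_index:
  assumes "Z \<in> carrier_mat (2 ^ N * m) (2 ^ N * m)" and "a < 2 ^ N * m" and "b < 2 ^ N * m"
  shows "apply_kraus (2 ^ N * m) (id_qubits_classical N m) Z $$ (a, b) =
    (if a mod m = b mod m then Z $$ (a, b) else 0)"
proof -
  let ?n = "2 ^ N * m"
  have "\<forall>K\<in>set (id_qubits_classical N m). K \<in> carrier_mat ?n ?n"
    by (auto simp: id_qubits_classical_def classical_reg_proj_def)
  then have "apply_kraus ?n (id_qubits_classical N m) Z $$ (a, b) =
    (\<Sum>x<m. \<Sum>p<?n. \<Sum>q<?n. classical_reg_proj N m x $$ (a, p) * Z $$ (p, q)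
       * cnj (classical_reg_proj N m x $$ (b, q)))"
    using assms by (simp add: apply_kraus_index id_qubits_classical_def)
  also have "\<dots> = (\<Sum>x<m. \<Sum>p<?n. \<Sum>q<?n.
      if p = a \<and> q = b then (if a mod m = x \<and> b mod m = x then Z $$ (p, q) else 0) else 0)"
    using assms by (intro sum.cong refl) (auto simp: classical_reg_proj_def)
  also have "\<dots> = (\<Sum>x<m. if x = a mod m then (if a mod m = b mod m then Z $$ (a, b) else 0) else 0)"
    using assms by (intro sum.cong refl) (auto simp: sum_sum_delta)
  also have "\<dots> = (if a mod m = b mod m then Z $$ (a, b) else 0)"
    using assms by (cases "m = 0") auto
  finally show ?thesis .
qed

text \<open>The left side is \<open>d\<^sup>2 F\<^sub>c\<close>; the diagonal entry \<open>(E\<^sub>t D\<^sub>l)\<^sub>a\<^sub>a\<close> is the \<open>a\<close>-th summand of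
  \<open>tr (D\<^sub>l P\<^sub>x E\<^sub>t)\<close> for \<open>x = a mod m\<close>.\<close>

lemma composite_dephased_fidelity_sum:
  fixes N m d :: nat and KE KD :: "complex mat list"
  defines "n \<equiv> 2 ^ N * m"
  assumes KE: "\<forall>K\<in>set KE. K \<in> carrier_mat n d" and KD: "\<forall>K\<in>set KD. K \<in> carrier_mat d n"
  shows "(\<Sum>i<d. \<Sum>j<d. (apply_kraus d KD \<circ> apply_kraus n (id_qubits_classical N m) \<circ> apply_kraus n KE)
            (mat_unit d i j) $$ (i, j))
    = (\<Sum>l<length KD. \<Sum>t<length KE. \<Sum>a<n. \<Sum>b<n.
         if a mod m = b mod m then (KE ! t * KD ! l) $$ (a, a) * cnj ((KE ! t * KD ! l) $$ (b, b)) else 0)"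
proof -
  let ?g = "\<lambda>l t a i. (KE ! t) $$ (a, i) * (KD ! l) $$ (i, a)"
  have entry: "(apply_kraus d KD \<circ> apply_kraus n (id_qubits_classical N m) \<circ> apply_kraus n KE)
      (mat_unit d i j) $$ (i, j) =
    (\<Sum>l<length KD. \<Sum>t<length KE. \<Sum>a<n. \<Sum>b<n.
       if a mod m = b mod m then ?g l t a i * cnj (?g l t b j) else 0)"
    if ij: "i < d" "j < d" for i j
  proof -
    define Z where "Z = apply_kraus n KE (mat_unit d i j)"
    have "mat_unit d i j \<in> carrier_mat d d"
      by (simp add: mat_unit_def)
    then have Z: "Z \<in> carrier_mat n n"
      unfolding Z_def by (rule apply_kraus_carrier[OF KE])
    have Y: "apply_kraus n (id_qubits_classical N m) Z \<in> carrier_mat n n"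
      using Z unfolding n_def
      by (intro apply_kraus_carrier) (auto simp: id_qubits_classical_def classical_reg_proj_def)
    have "(apply_kraus d KD \<circ> apply_kraus n (id_qubits_classical N m) \<circ> apply_kraus n KE)
        (mat_unit d i j) $$ (i, j) =
      (\<Sum>l<length KD. \<Sum>a<n. \<Sum>b<n. (KD ! l) $$ (i, a) *
         (if a mod m = b mod m then \<Sum>t<length KE. (KE ! t) $$ (a, i) * cnj ((KE ! t) $$ (b, j)) else 0)
         * cnj ((KD ! l) $$ (j, b)))"
      using ij KD KE Z Y unfolding Z_def n_def
      by (simp add: apply_kraus_index apply_kraus_id_qubits_classical_index apply_kraus_mat_unit_index
          cong: if_cong)
    also have "\<dots> = (\<Sum>l<length KD. \<Sum>a<n. \<Sum>b<n. \<Sum>t<length KE.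
         if a mod m = b mod m then ?g l t a i * cnj (?g l t b j) else 0)"
      by (intro sum.cong refl) (simp add: sum_distrib_left sum_distrib_right mult_ac)
    also have "\<dots> = (\<Sum>l<length KD. \<Sum>t<length KE. \<Sum>a<n. \<Sum>b<n.
         if a mod m = b mod m then ?g l t a i * cnj (?g l t b j) else 0)"
      by (rule sum.cong[OF refl], rule sum_rotate3)
    finally show ?thesis .
  qed
  have "(\<Sum>i<d. \<Sum>j<d. (apply_kraus d KD \<circ> apply_kraus n (id_qubits_classical N m) \<circ> apply_kraus n KE)
            (mat_unit d i j) $$ (i, j))
    = (\<Sum>i<d. \<Sum>j<d. \<Sum>l<length KD. \<Sum>t<length KE. \<Sum>a<n. \<Sum>b<n.
         if a mod m = b mod m then ?g l t a i * cnj (?g l t b j) else 0)"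
    by (intro sum.cong refl) (rule entry; simp)
  also have "\<dots> = (\<Sum>l<length KD. \<Sum>t<length KE. \<Sum>a<n. \<Sum>b<n. \<Sum>i<d. \<Sum>j<d.
         if a mod m = b mod m then ?g l t a i * cnj (?g l t b j) else 0)"
    by ((subst sum_rotate3, rule sum.cong[OF refl])+) (rule refl)
  also have "\<dots> = (\<Sum>l<length KD. \<Sum>t<length KE. \<Sum>a<n. \<Sum>b<n.
         if a mod m = b mod m then (KE ! t * KD ! l) $$ (a, a) * cnj ((KE ! t * KD ! l) $$ (b, b)) else 0)"
  proof (intro sum.cong refl)
    fix l t a b
    assume lt: "l \<in> {..<length KD}" "t \<in> {..<length KE}" and ab: "a \<in> {..<n}" "b \<in> {..<n}"
    have diag: "(KE ! t * KD ! l) $$ (c, c) = (\<Sum>i<d. ?g l t c i)" if "c < n" for c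
      using lt that KE KD by (intro mat_mult_diag_index) auto
    show "(\<Sum>i<d. \<Sum>j<d. if a mod m = b mod m then ?g l t a i * cnj (?g l t b j) else 0) =
      (if a mod m = b mod m then (KE ! t * KD ! l) $$ (a, a) * cnj ((KE ! t * KD ! l) $$ (b, b)) else 0)"
      using ab by (simp add: diag cnj_sum sum_product)
  qed
  finally show ?thesis .
qed

lemma kraus_composite_diag_norm_sum_le:
  assumes "kraus_channel d n KE" and "kraus_channel n d KD"
  shows "(\<Sum>l<length KD. \<Sum>t<length KE. \<Sum>a<n. (cmod ((KE ! t * KD ! l) $$ (a, a)))\<^sup>2) \<le> d"
proof -
  define u where "u l a = (\<Sum>i<d. (cmod ((KD ! l) $$ (i, a)))\<^sup>2)" for l a
  define v where "v t a = (\<Sum>i<d. (cmod ((KE ! t) $$ (a, i)))\<^sup>2)" for t a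
  have KE: "\<forall>K\<in>set KE. K \<in> carrier_mat n d" and KD: "\<forall>K\<in>set KD. K \<in> carrier_mat d n"
    using assms unfolding kraus_channel_def by auto
  have "(\<Sum>l<length KD. \<Sum>t<length KE. \<Sum>a<n. (cmod ((KE ! t * KD ! l) $$ (a, a)))\<^sup>2)
      \<le> (\<Sum>l<length KD. \<Sum>t<length KE. \<Sum>a<n. v t a * u l a)"
  proof (intro sum_mono)
    fix l t a assume "l \<in> {..<length KD}" "t \<in> {..<length KE}" "a \<in> {..<n}"
    then have "(KE ! t * KD ! l) $$ (a, a) = (\<Sum>i<d. (KE ! t) $$ (a, i) * (KD ! l) $$ (i, a))"
      using KE KD by (intro mat_mult_diag_index) auto
    then show "(cmod ((KE ! t * KD ! l) $$ (a, a)))\<^sup>2 \<le> v t a * u l a"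
      unfolding u_def v_def by (simp add: cmod_sum_mult_square_le)
  qed
  also have "\<dots> = (\<Sum>a<n. \<Sum>l<length KD. \<Sum>t<length KE. v t a * u l a)"
    by (rule sum_rotate3)
  also have "\<dots> = (\<Sum>a<n. (\<Sum>t<length KE. v t a) * (\<Sum>l<length KD. u l a))"
    by (rule sum.cong[OF refl]) (simp add: sum_product sum.swap[of _ "{..<length KD}"])
  also have "\<dots> = (\<Sum>a<n. \<Sum>t<length KE. v t a)"
    using kraus_channel_column_norm[OF assms(2)] by (simp add: u_def)
  also have "\<dots> = (\<Sum>i<d. \<Sum>t<length KE. \<Sum>a<n. (cmod ((KE ! t) $$ (a, i)))\<^sup>2)"
    unfolding v_def by (subst sum_rotate3[symmetric]) (rule sum.swap)
  also have "\<dots> = d"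
    using kraus_channel_column_norm[OF assms(1)] by simp
  finally show ?thesis .
qed

theorem lemma16:
  fixes R :: real and N k m :: nat
    and KE KD :: "complex mat list"
  assumes "R > 1" and "N \<ge> 1" and "real k = R * real N"
    and "m \<ge> 1"
    and "kraus_channel (2 ^ k) (2 ^ N * m) KE"
    and "kraus_channel (2 ^ N * m) (2 ^ k) KD"
  shows "Re (channel_fidelity (2 ^ k)
            (apply_kraus (2 ^ k) KD \<circ> apply_kraus (2 ^ N * m) (id_qubits_classical N m)
               \<circ> apply_kraus (2 ^ N * m) KE))
         \<le> 2 powr (- (R - 1) * real N)"
proof -
  let ?d = "2 ^ k :: nat" and ?n = "2 ^ N * m :: nat"
  let ?D = "\<lambda>l t a. (KE ! t * KD ! l) $$ (a, a)"
  have "\<forall>K\<in>set KE. K \<in> carrier_mat ?n ?d" "\<forall>K\<in>set KD. K \<in> carrier_mat ?d ?n"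
    using assms(5,6) unfolding kraus_channel_def by auto
  note trace_sum = composite_dephased_fidelity_sum[OF this]
  have "Re (channel_fidelity ?d
            (apply_kraus ?d KD \<circ> apply_kraus ?n (id_qubits_classical N m) \<circ> apply_kraus ?n KE))
    = (\<Sum>l<length KD. \<Sum>t<length KE. Re (\<Sum>a<?n. \<Sum>b<?n.
         if a mod m = b mod m then ?D l t a * cnj (?D l t b) else 0)) / (?d * ?d)"
    unfolding channel_fidelity_def trace_sum
    by (simp only: Re_divide_of_nat Re_sum)
  also have "\<dots> \<le> (\<Sum>l<length KD. \<Sum>t<length KE. 2 ^ N * (\<Sum>a<?n. (cmod (?D l t a))\<^sup>2)) / (?d * ?d)"
    using Re_sum_same_residue_le[OF assms(4), where M = "2 ^ N"] by (intro divide_right_mono sum_mono) simp_all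
  also have "\<dots> \<le> 2 ^ N * ?d / (?d * ?d)"
    using kraus_composite_diag_norm_sum_le[OF assms(5,6)]
    by (intro divide_right_mono) (simp_all add: sum_distrib_left[symmetric])
  also have "\<dots> = 2 powr (real N - real k)"
    by (simp add: powr_diff powr_realpow)
  also have "real N - real k = - (R - 1) * real N"
    using assms(3) by (simp add: algebra_simps)
  finally show ?thesis .
qed

end
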